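(* Let $G=(\mathcal{S},\mathbb{A})$ be a finite directed acyclic graph with a unique initial state $\mathbf{s}_0$ (no incoming edges), and let $\mathcal{X}\subseteq\mathcal{S}$ be the set of terminal states. A complete trajectory is a path $\tau=(\mathbf{s}_0\to\mathbf{s}_1\to\dots\to\mathbf{s}_n)$ in $G$ with $\mathbf{s}_n=\mathbf{x}\in\mathcal{X}$. Let $R:\mathcal{X}\to\mathbb{R}_{\ge 0}$ be the extrinsic reward, let $r:\mathcal{X}\to\mathbb{R}_{\ge 0}$ be a state-based intrinsic reward on terminal states, and let $r(\mathbf{s}\to\mathbf{s}')\ge 0$ be edge-based intrinsic rewards on the edges of $G$. Let $Z>0$, let $F:\mathcal{S}\to\mathbb{R}_{>0}$ be a state flow, let $P_F(\cdot\mid\mathbf{s})$ be a forward policy (a probability distribution over the children of each non-terminal state $\mathbf{s}$), and let $P_B(\cdot\mid\mathbf{s}')$ be a backward policy (a probability distribution over the parents of each state $\mathbf{s}'\neq\mathbf{s}_0$). Define for each complete trajectory $\tau$ $$\mathcal{L}_{\rm GAFlowNet}(\tau)=\Big(\log\Big(Z\prod_{t=0}^{n-1}P_F(\mathbf{s}_{t+1}\mid\mathbf{s}_t)\Big)-\log\Big(\big[R(\mathbf{x})+r(\mathbf{x})\big]\prod_{t=0}^{n-1}\Big[P_B(\mathbf{s}_t\mid\mathbf{s}_{t+1})+\frac{r(\mathbf{s}_t\to\mathbf{s}_{t+1})}{F(\mathbf{s}_{t+1})}\Big]\Big)\Big)^2,$$ and let $P(\mathbf{x})=\sum_{\tau:\,\mathbf{s}_n=\mathbf{x}}\prod_{t=0}^{n-1}P_F(\mathbf{s}_{t+1}\mid\mathbf{s}_t)$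 be the probability that sampling a trajectory from $\mathbf{s}_0$ with the forward policy terminates at $\mathbf{x}$. Suppose that $\mathcal{L}_{\rm GAFlowNet}(\tau)=0$ for all complete trajectories $\tau$, and that $R(\mathbf{x})+r(\mathbf{x})>0$ for all $\mathbf{x}\in\mathcal{X}$. Then, when the edge-based intrinsic rewards $r(\mathbf{s}\to\mathbf{s}')$ converge to $0$ (with $F$ not vanishing): (1) $P(\mathbf{x})=\dfrac{R(\mathbf{x})+r(\mathbf{x})}{\sum_{\mathbf{x}'\in\mathcal{X}}[R(\mathbf{x}')+r(\mathbf{x}')]}$ for every $\mathbf{x}\in\mathcal{X}$; (2) if moreover the state-based intrinsic rewards $r(\mathbf{x})$ converge to $0$, then $P$ is an unbiased sampling distribution, i.e. $P(\mathbf{x})=R(\mathbf{x})/\sum_{\mathbf{x}'\in\mathcal{X}}R(\mathbf{x}')$.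
   Context: This is the setting of Generative Flow Networks (GFlowNets) with intermediate (intrinsic) rewards. The edge-based intrinsic rewards $r(\mathbf{s}\to\mathbf{s}')$ are extra flows attached to transitions, and the state-based intrinsic reward $r(\mathbf{x})$ augments the terminal reward $R(\mathbf{x})$. $Z$ plays the role of the (augmented) total flow. "Unbiased" means that terminal states are sampled with probability proportional to the extrinsic reward $R$. *)

theory Defs
  imports Complex_Main
begin

definition terminal_states :: "'a set \<Rightarrow> ('a \<times> 'a) set \<Rightarrow> 'a set" where
  "terminal_states S E = {s \<in> S. \<forall>s'. (s, s') \<notin> E}"

definition children :: "('a \<times> 'a) set \<Rightarrow> 'a \<Rightarrow> 'a set" where
  "children E s = {s'. (s, s') \<in> E}"

definition parents :: "('a \<times> 'a) set \<Rightarrow> 'a \<Rightarrow> 'a set" where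
  "parents E s' = {s. (s, s') \<in> E}"

definition complete_traj :: "('a \<times> 'a) set \<Rightarrow> 'a \<Rightarrow> 'a set \<Rightarrow> 'a list \<Rightarrow> bool" where
  "complete_traj E s0 X \<tau> \<longleftrightarrow>
     \<tau> \<noteq> [] \<and> hd \<tau> = s0 \<and> (\<forall>t. Suc t < length \<tau> \<longrightarrow> (\<tau> ! t, \<tau> ! Suc t) \<in> E) \<and> last \<tau> \<in> X"

definition path_prod :: "('a \<Rightarrow> 'a \<Rightarrow> real) \<Rightarrow> 'a list \<Rightarrow> real" where
  "path_prod f \<tau> = (\<Prod>t < length \<tau> - 1. f (\<tau> ! t) (\<tau> ! Suc t))"

text \<open>Convention: PF s s' = P_F(s' | s), PB s' s = P_B(s | s'),
  re s s' = r(s -> s') (edge reward), rx x = r(x) (state reward).\<close>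

definition gaf_lhs :: "real \<Rightarrow> ('a \<Rightarrow> 'a \<Rightarrow> real) \<Rightarrow> 'a list \<Rightarrow> real" where
  "gaf_lhs Z PF \<tau> = Z * path_prod PF \<tau>"

definition gaf_rhs :: "('a \<Rightarrow> real) \<Rightarrow> ('a \<Rightarrow> real) \<Rightarrow> ('a \<Rightarrow> real) \<Rightarrow> ('a \<Rightarrow> 'a \<Rightarrow> real)
     \<Rightarrow> ('a \<Rightarrow> 'a \<Rightarrow> real) \<Rightarrow> 'a list \<Rightarrow> real" where
  "gaf_rhs R rx F PB re \<tau> =
     (R (last \<tau>) + rx (last \<tau>)) * path_prod (\<lambda>s s'. PB s' s + re s s' / F s') \<tau>"

text \<open>The GAFlowNet trajectory-balance loss (real-valued; only meaningful when
  both log arguments are positive).\<close>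

definition gaf_loss :: "real \<Rightarrow> ('a \<Rightarrow> 'a \<Rightarrow> real) \<Rightarrow> ('a \<Rightarrow> real) \<Rightarrow> ('a \<Rightarrow> real) \<Rightarrow> ('a \<Rightarrow> real)
     \<Rightarrow> ('a \<Rightarrow> 'a \<Rightarrow> real) \<Rightarrow> ('a \<Rightarrow> 'a \<Rightarrow> real) \<Rightarrow> 'a list \<Rightarrow> real" where
  "gaf_loss Z PF R rx F PB re \<tau> = (ln (gaf_lhs Z PF \<tau>) - ln (gaf_rhs R rx F PB re \<tau>))\<^sup>2"

text \<open>"The loss equals 0" (as an actual real number, i.e. both logarithms are finite).\<close>

definition gaf_loss_zero :: "real \<Rightarrow> ('a \<Rightarrow> 'a \<Rightarrow> real) \<Rightarrow> ('a \<Rightarrow> real) \<Rightarrow> ('a \<Rightarrow> real) \<Rightarrow> ('a \<Rightarrow> real)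
     \<Rightarrow> ('a \<Rightarrow> 'a \<Rightarrow> real) \<Rightarrow> ('a \<Rightarrow> 'a \<Rightarrow> real) \<Rightarrow> 'a list \<Rightarrow> bool" where
  "gaf_loss_zero Z PF R rx F PB re \<tau> \<longleftrightarrow>
     0 < gaf_lhs Z PF \<tau> \<and> 0 < gaf_rhs R rx F PB re \<tau> \<and> gaf_loss Z PF R rx F PB re \<tau> = 0"

definition term_prob :: "('a \<times> 'a) set \<Rightarrow> 'a \<Rightarrow> 'a set \<Rightarrow> ('a \<Rightarrow> 'a \<Rightarrow> real) \<Rightarrow> 'a \<Rightarrow> real" where
  "term_prob E s0 X PF x = (\<Sum>\<tau> \<in> {\<tau>. complete_traj E s0 X \<tau> \<and> last \<tau> = x}. path_prod PF \<tau>)"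

end

(* Zero loss on a trajectory ending in x says Z * prod P_F = (R x + r x) * prod (P_B + r / F).
   Summing over the trajectories ending in x gives Z * P x = (R x + r x) * Q x, where Q x sums
   the corrected backward products. Reversed, these trajectories are exactly the complete
   trajectories of the backward policy from x to s0, so the products of P_B alone sum to 1;
   as the edge rewards vanish and F stays bounded below, Q x tends to 1. Since P sums to 1
   over the terminal states, Z is asymptotically the total augmented reward, and P x is
   asymptotically (R x + r x) / (sum of R + r). *)

theory Submission
  imports Defs
begin

fun edge_path :: "('a \<times> 'a) set \<Rightarrow> 'a list \<Rightarrow> bool" where
  "edge_path E [] = False"
| "edge_path E [x] = True"
| "edge_path E (x # y # xs) \<longleftrightarrow> (x, y) \<in> E \<and> edge_path E (y # xs)"

definition paths_into :: "('a \<times> 'a) set \<Rightarrow> 'a \<Rightarrow> 'a set \<Rightarrow> 'a list set" where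
  "paths_into E s T = {\<tau>. edge_path E \<tau> \<and> hd \<tau> = s \<and> last \<tau> \<in> T}"

lemma edge_path_iff:
  "edge_path E \<tau> \<longleftrightarrow> \<tau> \<noteq> [] \<and> (\<forall>t. Suc t < length \<tau> \<longrightarrow> (\<tau> ! t, \<tau> ! Suc t) \<in> E)"
  by (induction E \<tau> rule: edge_path.induct) (auto simp: less_Suc_eq_0_disj)

lemma edge_path_not_Nil: "edge_path E \<tau> \<Longrightarrow> \<tau> \<noteq> []"
  by auto

lemma complete_traj_iff_paths_into: "complete_traj E s0 X \<tau> \<longleftrightarrow> \<tau> \<in> paths_into E s0 X"
  unfolding complete_traj_def paths_into_def edge_path_iff by blast

lemma edge_path_Cons: "\<tau> \<noteq> [] \<Longrightarrow> edge_path E (x # \<tau>) \<longleftrightarrow> (x, hd \<tau>) \<in> E \<and> edge_path E \<tau>"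
  by (cases \<tau>) auto

lemma edge_path_snoc:
  "xs \<noteq> [] \<Longrightarrow> edge_path E (xs @ [y]) \<longleftrightarrow> edge_path E xs \<and> (last xs, y) \<in> E"
  by (induction xs) (auto simp: edge_path_Cons)

lemma edge_path_converse_rev: "edge_path (E\<inverse>) (rev \<tau>) \<longleftrightarrow> edge_path E \<tau>"
proof (induction \<tau>)
  case (Cons a \<tau>)
  then show ?case by (cases "\<tau> = []") (auto simp: edge_path_snoc edge_path_Cons last_rev)
qed simp

lemma path_prod_singleton [simp]: "path_prod f [x] = 1"
  by (simp add: path_prod_def)

lemma path_prod_Cons_Cons [simp]: "path_prod f (x # y # xs) = f x y * path_prod f (y # xs)"
  unfolding path_prod_def by (simp add: prod.lessThan_Suc_shift del: prod.lessThan_Suc)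

lemma path_prod_Cons: "\<tau> \<noteq> [] \<Longrightarrow> path_prod f (x # \<tau>) = f x (hd \<tau>) * path_prod f \<tau>"
  by (cases \<tau>) auto

lemma path_prod_snoc: "xs \<noteq> [] \<Longrightarrow> path_prod f (xs @ [y]) = path_prod f xs * f (last xs) y"
  by (induction xs) (auto simp: path_prod_Cons)

lemma path_prod_rev: "path_prod f (rev \<tau>) = path_prod (\<lambda>a b. f b a) \<tau>"
proof (induction \<tau>)
  case (Cons a \<tau>)
  then show ?case by (cases "\<tau> = []") (auto simp: path_prod_snoc path_prod_Cons last_rev)
qed (simp add: path_prod_def)

lemma edge_path_trancl: "edge_path E (x # xs) \<Longrightarrow> y \<in> set xs \<Longrightarrow> (x, y) \<in> E\<^sup>+"
proof (induction xs arbitrary: x)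
  case (Cons a xs)
  then show ?case by (auto intro: trancl_into_trancl2)
qed simp

lemma distinct_edge_path: "acyclic E \<Longrightarrow> edge_path E xs \<Longrightarrow> distinct xs"
proof (induction xs)
  case (Cons a xs)
  then show ?case
    using edge_path_trancl[of E a xs a] by (cases xs) (auto simp: acyclic_def)
qed simp

lemma set_edge_path_subset: "E \<subseteq> S \<times> S \<Longrightarrow> edge_path E xs \<Longrightarrow> hd xs \<in> S \<Longrightarrow> set xs \<subseteq> S"
proof (induction xs)
  case (Cons a xs)
  then show ?case by (cases xs) auto
qed simp

lemma finite_paths_into:
  assumes "finite S" "E \<subseteq> S \<times> S" "acyclic E" "s \<in> S"
  shows "finite (paths_into E s T)"
proof (rule finite_subset)
  show "paths_into E s T \<subseteq> {xs. set xs \<subseteq> S \<and> length xs \<le> card S}"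
  proof safe
    fix xs assume "xs \<in> paths_into E s T"
    then have "edge_path E xs" "hd xs = s" by (auto simp: paths_into_def)
    then have "set xs \<subseteq> S" "distinct xs"
      using set_edge_path_subset[OF assms(2)] distinct_edge_path[OF assms(3)] assms(4) by auto
    then show "length xs \<le> card S" using assms(1) by (metis distinct_card card_mono)
    show "x \<in> S" if "x \<in> set xs" for x using \<open>set xs \<subseteq> S\<close> that by blast
  qed
  show "finite {xs. set xs \<subseteq> S \<and> length xs \<le> card S}"
    using finite_lists_length_le[OF assms(1)] .
qed

lemma paths_into_Cons:
  assumes "s \<notin> T"
  shows "paths_into E s T = (\<lambda>(s', \<tau>). s # \<tau>) ` (SIGMA s':children E s. paths_into E s' T)"
proof safe
  fix \<tau> assume "\<tau> \<in> paths_into E s T"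
  with assms obtain y ys where "\<tau> = s # y # ys"
    by (auto simp: paths_into_def elim: edge_path.elims)
  with \<open>\<tau> \<in> paths_into E s T\<close>
  show "\<tau> \<in> (\<lambda>(s', \<tau>). s # \<tau>) ` (SIGMA s':children E s. paths_into E s' T)"
    by (auto simp: paths_into_def children_def image_iff intro!: bexI[of _ "(y, y # ys)"])
qed (auto simp: paths_into_def children_def edge_path_Cons elim: edge_path.elims)

lemma sum_path_prod_paths_into_terminal:
  assumes finS: "finite S" and E_sub: "E \<subseteq> S \<times> S" and acyc: "acyclic E" and "s \<in> S"
    and W_sum: "\<And>s. s \<in> S - terminal_states S E \<Longrightarrow> (\<Sum>s' \<in> children E s. W s s') = 1"
  shows "(\<Sum>\<tau> \<in> paths_into E s (terminal_states S E). path_prod W \<tau>) = 1"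
proof -
  have "wf (E\<inverse>)"
    using finite_subset[OF E_sub] finS acyc by (simp add: finite_acyclic_wf_converse)
  then show ?thesis using \<open>s \<in> S\<close>
  proof (induction s rule: wf_induct_rule)
    case (less s)
    define T where "T = terminal_states S E"
    define P where "P s = paths_into E s T" for s
    show ?case
    proof (cases "s \<in> T")
      case True
      then have "P s = {[s]}"
        by (auto simp: P_def paths_into_def T_def terminal_states_def elim: edge_path.elims)
      then show ?thesis by (simp add: P_def T_def)
    next
      case False
      have children_S: "children E s \<subseteq> S" using E_sub by (auto simp: children_def)
      have P_Cons: "P s = (\<lambda>(s', \<tau>). s # \<tau>) ` (SIGMA s':children E s. P s')"
        using paths_into_Cons[OF False] by (simp add: P_def)
      have "(\<Sum>\<tau> \<in> P s. path_prod W \<tau>)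
          = (\<Sum>(s', \<tau>) \<in> (SIGMA s':children E s. P s'). W s s' * path_prod W \<tau>)"
        unfolding P_Cons
        by (subst sum.reindex)
          (auto simp: inj_on_def P_def paths_into_def path_prod_Cons edge_path_not_Nil intro!: sum.cong)
      also have "\<dots> = (\<Sum>s' \<in> children E s. W s s' * (\<Sum>\<tau> \<in> P s'. path_prod W \<tau>))"
        using finite_subset[OF children_S finS] children_S finite_paths_into[OF finS E_sub acyc]
        by (subst sum.Sigma[symmetric]) (auto simp: P_def sum_distrib_left)
      also have "\<dots> = (\<Sum>s' \<in> children E s. W s s')"
        using less children_S by (intro sum.cong) (auto simp: P_def T_def children_def)
      also have "\<dots> = 1" using W_sum False \<open>s \<in> S\<close> by (simp add: T_def)
      finally show ?thesis by (simp add: P_def T_def)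
    qed
  qed
qed

lemma term_prob_eq_sum_paths_into:
  "term_prob E s0 X PF x = (\<Sum>\<tau> \<in> paths_into E s0 {x}. path_prod PF \<tau>)" if "x \<in> X"
  unfolding term_prob_def complete_traj_iff_paths_into paths_into_def using that
  by (intro sum.cong) auto

lemma sum_term_prob_eq_1:
  assumes finS: "finite S" and E_sub: "E \<subseteq> S \<times> S" and acyc: "acyclic E" and "s0 \<in> S"
    and X_def: "X = terminal_states S E"
    and PF_sum: "\<And>s. s \<in> S - X \<Longrightarrow> (\<Sum>s' \<in> children E s. PF s s') = 1"
  shows "(\<Sum>x \<in> X. term_prob E s0 X PF x) = 1"
proof -
  have "finite X" using finS by (simp add: X_def terminal_states_def)
  have "(\<Sum>x \<in> X. term_prob E s0 X PF x)
      = (\<Sum>x \<in> X. \<Sum>\<tau> \<in> {\<tau> \<in> paths_into E s0 X. last \<tau> = x}. path_prod PF \<tau>)"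
    by (intro sum.cong) (auto simp: term_prob_def complete_traj_iff_paths_into)
  also have "\<dots> = (\<Sum>\<tau> \<in> paths_into E s0 X. path_prod PF \<tau>)"
    using finite_paths_into[OF finS E_sub acyc \<open>s0 \<in> S\<close>] \<open>finite X\<close>
    by (intro sum.group) (auto simp: paths_into_def)
  also have "\<dots> = 1"
    using sum_path_prod_paths_into_terminal[OF finS E_sub acyc \<open>s0 \<in> S\<close>] PF_sum
    by (simp add: X_def)
  finally show ?thesis .
qed

lemma paths_into_converse: "paths_into (E\<inverse>) x {s} = rev ` paths_into E s {x}"
proof (rule set_eqI)
  fix \<sigma> :: "'a list"
  have "\<sigma> \<in> rev ` A \<longleftrightarrow> rev \<sigma> \<in> A" for A
    by (metis image_iff rev_rev_ident)
  then show "\<sigma> \<in> paths_into (E\<inverse>) x {s} \<longleftrightarrow> \<sigma> \<in> rev ` paths_into E s {x}"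
    using edge_path_converse_rev[of E "rev \<sigma>"]
    by (cases "\<sigma> = []") (auto simp: paths_into_def hd_rev last_rev)
qed

lemma sum_backward_path_prod_eq_1:
  assumes finS: "finite S" and E_sub: "E \<subseteq> S \<times> S" and acyc: "acyclic E" and "s0 \<in> S"
    and s0_init: "\<And>s. (s, s0) \<notin> E"
    and s0_unique: "\<And>s. s \<in> S \<Longrightarrow> s \<noteq> s0 \<Longrightarrow> \<exists>p. (p, s) \<in> E"
    and PB_sum: "\<And>s'. s' \<in> S - {s0} \<Longrightarrow> (\<Sum>s \<in> parents E s'. PB s' s) = 1"
    and "x \<in> S"
  shows "(\<Sum>\<tau> \<in> paths_into E s0 {x}. path_prod (\<lambda>s s'. PB s' s) \<tau>) = 1"
proof -
  have T: "terminal_states S (E\<inverse>) = {s0}"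
    using s0_init s0_unique \<open>s0 \<in> S\<close> by (auto simp: terminal_states_def)
  have "children (E\<inverse>) = parents E"
    by (auto simp: children_def parents_def)
  then have "(\<Sum>\<sigma> \<in> paths_into (E\<inverse>) x (terminal_states S (E\<inverse>)). path_prod PB \<sigma>) = 1"
    using E_sub acyc PB_sum
    by (intro sum_path_prod_paths_into_terminal[OF finS _ _ \<open>x \<in> S\<close>]) (auto simp: T)
  moreover note paths_into_converse[of E x s0]
  ultimately show ?thesis
    by (simp add: T sum.reindex path_prod_rev)
qed

lemma Bseq_mult_tendsto_0:
  fixes f g :: "nat \<Rightarrow> 'b::real_normed_algebra"
  assumes "Bseq f" and "g \<longlonglongrightarrow> 0"
  shows "(\<lambda>k. f k * g k) \<longlonglongrightarrow> 0"
  using bounded_bilinear.Bfun_prod_Zfun[OF bounded_bilinear_mult assms(1)] assms(2)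
  by (simp add: tendsto_Zfun_iff)

lemma Bseq_path_prod:
  fixes h :: "nat \<Rightarrow> 'a \<Rightarrow> 'a \<Rightarrow> real"
  assumes "edge_path E \<tau>" and "\<And>a b. (a, b) \<in> E \<Longrightarrow> Bseq (\<lambda>k. h k a b)"
  shows "Bseq (\<lambda>k. path_prod (h k) \<tau>)"
  using assms(1)
proof (induction \<tau> rule: induct_list012)
  case (3 x y xs)
  then show ?case using Bseq_mult[OF assms(2)] by simp
qed (auto simp: Bseq_def)

lemma path_prod_diff_tendsto_0:
  fixes g h :: "nat \<Rightarrow> 'a \<Rightarrow> 'a \<Rightarrow> real"
  assumes "edge_path E \<tau>"
    and diff: "\<And>a b. (a, b) \<in> E \<Longrightarrow> (\<lambda>k. g k a b - h k a b) \<longlonglongrightarrow> 0"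
    and bounded: "\<And>a b. (a, b) \<in> E \<Longrightarrow> Bseq (\<lambda>k. h k a b)"
  shows "(\<lambda>k. path_prod (g k) \<tau> - path_prod (h k) \<tau>) \<longlonglongrightarrow> 0"
  using assms(1)
proof (induction \<tau> rule: induct_list012)
  case (3 x y xs)
  define d where "d = (\<lambda>k. g k x y - h k x y)"
  define D where "D = (\<lambda>k. path_prod (g k) (y # xs) - path_prod (h k) (y # xs))"
  have "(x, y) \<in> E" and path: "edge_path E (y # xs)" using "3.prems" by auto
  have d: "d \<longlonglongrightarrow> 0" using diff[OF \<open>(x, y) \<in> E\<close>] by (simp add: d_def)
  have D: "D \<longlonglongrightarrow> 0" using "3.IH"(2)[OF path] by (simp add: D_def)
  have "(\<lambda>k. d k * D k + h k x y * D k + path_prod (h k) (y # xs) * d k) \<longlonglongrightarrow> 0 * 0 + 0 + 0"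
    using bounded[OF \<open>(x, y) \<in> E\<close>] Bseq_path_prod[OF path bounded]
    by (intro tendsto_add tendsto_mult d D Bseq_mult_tendsto_0)
  then show ?case by (simp add: d_def D_def algebra_simps)
qed auto

lemma normalized_weights_asymptotics:
  fixes w Q P :: "nat \<Rightarrow> 'a \<Rightarrow> real" and Z :: "nat \<Rightarrow> real"
  assumes "finite X" and "x \<in> X"
    and w_pos: "\<And>k y. y \<in> X \<Longrightarrow> 0 < w k y"
    and Q_lim: "\<And>y. y \<in> X \<Longrightarrow> (\<lambda>k. Q k y) \<longlonglongrightarrow> 1"
    and balance: "\<And>k y. y \<in> X \<Longrightarrow> Z k * P k y = w k y * Q k y"
    and P_sum: "\<And>k. (\<Sum>y \<in> X. P k y) = 1"
    and Z_pos: "\<And>k. 0 < Z k"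
  shows "(\<lambda>k. P k x - w k x / (\<Sum>y \<in> X. w k y)) \<longlonglongrightarrow> 0"
proof -
  define a where "a k y = w k y / (\<Sum>y \<in> X. w k y)" for k y
  define D where "D k = (\<Sum>y \<in> X. a k y * Q k y)" for k
  have w_sum_pos: "0 < (\<Sum>y \<in> X. w k y)" for k
    using w_pos \<open>finite X\<close> \<open>x \<in> X\<close> by (intro sum_pos) auto
  have a_bounded: "Bseq (\<lambda>k. a k y)" if "y \<in> X" for y
  proof (rule BseqI[of 1, rule_format])
    fix k
    have "w k y \<le> (\<Sum>y \<in> X. w k y)"
      using w_pos that \<open>finite X\<close> by (intro member_le_sum) (auto simp: less_imp_le)
    then show "norm (a k y) \<le> 1"
      using w_pos[OF that, of k] w_sum_pos[of k] by (simp add: a_def)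
  qed simp
  have a_sum: "(\<Sum>y \<in> X. a k y) = 1" for k
    using w_sum_pos[of k] by (simp add: a_def flip: sum_divide_distrib)
  have Z_eq: "Z k = (\<Sum>y \<in> X. w k y) * D k" for k
  proof -
    have "Z k = (\<Sum>y \<in> X. Z k * P k y)" by (simp add: P_sum flip: sum_distrib_left)
    also have "\<dots> = (\<Sum>y \<in> X. w k y * Q k y)" by (simp add: balance)
    finally show ?thesis
      using w_sum_pos[of k] by (simp add: D_def a_def sum_distrib_left)
  qed
  have D_pos: "0 < D k" for k
    using Z_eq[of k] Z_pos[of k] w_sum_pos[of k] by (simp add: zero_less_mult_iff)
  have "(\<lambda>k. \<Sum>y \<in> X. a k y * (Q k y - 1)) \<longlonglongrightarrow> 0"
    using a_bounded Q_lim by (intro tendsto_null_sum Bseq_mult_tendsto_0) (auto simp: LIM_zero_iff)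
  moreover have "D k - 1 = (\<Sum>y \<in> X. a k y * (Q k y - 1))" for k
    using a_sum[of k] by (simp add: D_def algebra_simps sum_subtractf)
  ultimately have D_lim: "D \<longlonglongrightarrow> 1"
    by (simp add: LIM_zero_cancel)
  have "P k x - a k x = a k x * (Q k x - D k) / D k" for k
    using balance[OF \<open>x \<in> X\<close>, of k] Z_eq[of k] w_sum_pos[of k] D_pos[of k] Z_pos[of k]
    by (simp add: a_def field_simps)
  moreover have "(\<lambda>k. a k x * (Q k x - D k) / D k) \<longlonglongrightarrow> 0 / 1"
    using a_bounded[OF \<open>x \<in> X\<close>] Q_lim[OF \<open>x \<in> X\<close>] D_lim
    by (intro tendsto_divide Bseq_mult_tendsto_0) (auto simp: LIM_zero_iff intro: tendsto_eq_intros)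
  ultimately show ?thesis by (simp add: a_def)
qed

lemma tendsto_normalized_limit:
  fixes R :: "'a \<Rightarrow> real" and r :: "nat \<Rightarrow> 'a \<Rightarrow> real"
  assumes "(\<lambda>k. p k - (R x + r k x) / (\<Sum>y \<in> X. R y + r k y)) \<longlonglongrightarrow> 0"
    and "x \<in> X" and "\<And>y. y \<in> X \<Longrightarrow> (\<lambda>k. r k y) \<longlonglongrightarrow> 0" and "(\<Sum>y \<in> X. R y) \<noteq> 0"
  shows "p \<longlonglongrightarrow> R x / (\<Sum>y \<in> X. R y)"
proof -
  have "(\<lambda>k. (R x + r k x) / (\<Sum>y \<in> X. R y + r k y)) \<longlonglongrightarrow> (R x + 0) / (\<Sum>y \<in> X. R y + 0)"
    using assms(2-4) by (intro tendsto_intros) auto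
  from tendsto_add[OF assms(1) this] show ?thesis by simp
qed

lemma gaf_loss_zero_imp_balance:
  "gaf_loss_zero Z PF R rx F PB re \<tau> \<Longrightarrow> gaf_lhs Z PF \<tau> = gaf_rhs R rx F PB re \<tau>"
  by (auto simp: gaf_loss_zero_def gaf_loss_def)

lemma term_prob_balance:
  assumes "x \<in> X"
    and "\<And>\<tau>. complete_traj E s0 X \<tau> \<Longrightarrow> gaf_loss_zero Z PF R rx F PB re \<tau>"
  shows "Z * term_prob E s0 X PF x
    = (R x + rx x) * (\<Sum>\<tau> \<in> paths_into E s0 {x}. path_prod (\<lambda>s s'. PB s' s + re s s' / F s') \<tau>)"
proof -
  have "Z * path_prod PF \<tau> = (R x + rx x) * path_prod (\<lambda>s s'. PB s' s + re s s' / F s') \<tau>"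
    if "\<tau> \<in> paths_into E s0 {x}" for \<tau>
    using that assms gaf_loss_zero_imp_balance[of Z PF R rx F PB re \<tau>]
    by (auto simp: complete_traj_iff_paths_into paths_into_def gaf_lhs_def gaf_rhs_def)
  then show ?thesis
    by (simp add: term_prob_eq_sum_paths_into[OF \<open>x \<in> X\<close>] sum_distrib_left)
qed

lemma Bseq_distribution_member:
  fixes p :: "nat \<Rightarrow> 'a \<Rightarrow> real"
  assumes "finite A" and "a \<in> A"
    and "\<And>k b. b \<in> A \<Longrightarrow> 0 \<le> p k b" and "\<And>k. (\<Sum>b \<in> A. p k b) = 1"
  shows "Bseq (\<lambda>k. p k a)"
proof (rule BseqI[of 1, rule_format])
  fix k
  have "p k a \<le> (\<Sum>b \<in> A. p k b)" using assms by (intro member_le_sum) auto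
  then show "norm (p k a) \<le> 1" using assms by simp
qed simp

lemma sum_corrected_backward_path_prod_tendsto_1:
  fixes PB re :: "nat \<Rightarrow> 'a \<Rightarrow> 'a \<Rightarrow> real" and F :: "nat \<Rightarrow> 'a \<Rightarrow> real"
  assumes finS: "finite S" and E_sub: "E \<subseteq> S \<times> S" and acyc: "acyclic E" and "s0 \<in> S"
    and s0_init: "\<And>s. (s, s0) \<notin> E"
    and s0_unique: "\<And>s. s \<in> S \<Longrightarrow> s \<noteq> s0 \<Longrightarrow> \<exists>p. (p, s) \<in> E"
    and PB_dist: "\<And>k s'. s' \<in> S - {s0} \<Longrightarrow>
                    (\<forall>s \<in> parents E s'. 0 \<le> PB k s' s) \<and> (\<Sum>s \<in> parents E s'. PB k s' s) = 1"
    and re_lim: "\<And>s s'. (s, s') \<in> E \<Longrightarrow> (\<lambda>k. re k s s') \<longlonglongrightarrow> 0"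
    and "0 < c" and F_ge: "\<And>k s. s \<in> S \<Longrightarrow> c \<le> F k s"
    and "x \<in> S"
  shows "(\<lambda>k. \<Sum>\<tau> \<in> paths_into E s0 {x}. path_prod (\<lambda>s s'. PB k s' s + re k s s' / F k s') \<tau>)
           \<longlonglongrightarrow> 1"
proof -
  have re_F_lim: "(\<lambda>k. re k s s' / F k s') \<longlonglongrightarrow> 0" if "(s, s') \<in> E" for s s'
  proof -
    have "Bseq (\<lambda>k. inverse (F k s'))"
      using F_ge that E_sub \<open>0 < c\<close>
      by (intro BseqI[of "inverse c"]) (auto intro!: le_imp_inverse_le order_trans[OF _ abs_ge_self])
    from Bseq_mult_tendsto_0[OF this re_lim[OF that]] show ?thesis by (simp add: field_simps)
  qed
  have PB_bounded: "Bseq (\<lambda>k. PB k s' s)" if "(s, s') \<in> E" for s s'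
    using PB_dist that E_sub s0_init finite_subset[OF _ finS, of "parents E s'"]
    by (intro Bseq_distribution_member[of "parents E s'"]) (auto simp: parents_def)
  have "(\<lambda>k. \<Sum>\<tau> \<in> paths_into E s0 {x}. path_prod (\<lambda>s s'. PB k s' s + re k s s' / F k s') \<tau>
                  - path_prod (\<lambda>s s'. PB k s' s) \<tau>) \<longlonglongrightarrow> 0"
    using re_F_lim PB_bounded
    by (intro tendsto_null_sum path_prod_diff_tendsto_0) (auto simp: paths_into_def)
  moreover have "(\<Sum>\<tau> \<in> paths_into E s0 {x}. path_prod (\<lambda>s s'. PB k s' s) \<tau>) = 1" for k
    using PB_dist s0_init s0_unique \<open>x \<in> S\<close>
    by (intro sum_backward_path_prod_eq_1[OF finS E_sub acyc \<open>s0 \<in> S\<close>]) auto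
  ultimately show ?thesis by (simp add: sum_subtractf LIM_zero_cancel)
qed

theorem theorem1:
  fixes S :: "'a set" and E :: "('a \<times> 'a) set" and s0 :: 'a and X :: "'a set"
    and R :: "'a \<Rightarrow> real"
    and rx :: "nat \<Rightarrow> 'a \<Rightarrow> real"
    and re :: "nat \<Rightarrow> 'a \<Rightarrow> 'a \<Rightarrow> real"
    and Z :: "nat \<Rightarrow> real"
    and F :: "nat \<Rightarrow> 'a \<Rightarrow> real"
    and PF :: "nat \<Rightarrow> 'a \<Rightarrow> 'a \<Rightarrow> real"
    and PB :: "nat \<Rightarrow> 'a \<Rightarrow> 'a \<Rightarrow> real"
  assumes finS: "finite S"
    and E_sub: "E \<subseteq> S \<times> S"
    and acyc: "acyclic E"
    and s0_in: "s0 \<in> S"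
    and s0_init: "\<forall>s. (s, s0) \<notin> E"
    and s0_unique: "\<forall>s \<in> S. s \<noteq> s0 \<longrightarrow> (\<exists>p. (p, s) \<in> E)"
    and X_def: "X = terminal_states S E"
    and R_nonneg: "\<forall>x \<in> X. 0 \<le> R x"
    and rx_nonneg: "\<forall>k. \<forall>x \<in> X. 0 \<le> rx k x"
    and re_nonneg: "\<forall>k. \<forall>(s, s') \<in> E. 0 \<le> re k s s'"
    and Z_pos: "\<forall>k. 0 < Z k"
    and F_pos: "\<forall>k. \<forall>s \<in> S. 0 < F k s"
    and PF_dist: "\<forall>k. \<forall>s \<in> S - X. (\<forall>s' \<in> children E s. 0 \<le> PF k s s')
                    \<and> (\<Sum>s' \<in> children E s. PF k s s') = 1"
    and PB_dist: "\<forall>k. \<forall>s' \<in> S - {s0}. (\<forall>s \<in> parents E s'. 0 \<le> PB k s' s)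
                    \<and> (\<Sum>s \<in> parents E s'. PB k s' s) = 1"
    and loss_zero: "\<forall>k. \<forall>\<tau>. complete_traj E s0 X \<tau> \<longrightarrow>
                    gaf_loss_zero (Z k) (PF k) R (rx k) (F k) (PB k) (re k) \<tau>"
    and Rr_pos: "\<forall>k. \<forall>x \<in> X. 0 < R x + rx k x"
    and re_to_0: "\<forall>(s, s') \<in> E. (\<lambda>k. re k s s') \<longlonglongrightarrow> 0"
    and F_nonvanishing: "\<exists>c > 0. \<forall>k. \<forall>s \<in> S. c \<le> F k s"
  shows "(\<forall>x \<in> X. (\<lambda>k. term_prob E s0 X (PF k) x
              - (R x + rx k x) / (\<Sum>y \<in> X. R y + rx k y)) \<longlonglongrightarrow> 0)
       \<and> ((\<forall>x \<in> X. (\<lambda>k. rx k x) \<longlonglongrightarrow> 0) \<and> 0 < (\<Sum>y \<in> X. R y) \<longrightarrow>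
          (\<forall>x \<in> X. (\<lambda>k. term_prob E s0 X (PF k) x) \<longlonglongrightarrow> R x / (\<Sum>y \<in> X. R y)))"
proof -
  have "finite X" using finS by (simp add: X_def terminal_states_def)
  have X_S: "X \<subseteq> S" by (simp add: X_def terminal_states_def)
  define Q where "Q k x = (\<Sum>\<tau> \<in> paths_into E s0 {x}.
                              path_prod (\<lambda>s s'. PB k s' s + re k s s' / F k s') \<tau>)" for k x
  obtain c where "0 < c" and F_ge: "\<And>k s. s \<in> S \<Longrightarrow> c \<le> F k s" using F_nonvanishing by blast
  have Q_lim: "(\<lambda>k. Q k x) \<longlonglongrightarrow> 1" if "x \<in> X" for x
    unfolding Q_def using PB_dist re_to_0 F_ge s0_init s0_unique that X_S
    by (intro sum_corrected_backward_path_prod_tendsto_1[OF finS E_sub acyc s0_in _ _ _ _ \<open>0 < c\<close>])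
       auto
  have term_prob_asymptotics: "\<forall>x \<in> X. (\<lambda>k. term_prob E s0 X (PF k) x
              - (R x + rx k x) / (\<Sum>y \<in> X. R y + rx k y)) \<longlonglongrightarrow> 0"
    using \<open>finite X\<close> Rr_pos Q_lim Z_pos loss_zero PF_dist
      term_prob_balance[where Z = "Z k" and PF = "PF k" and rx = "rx k" and F = "F k"
        and PB = "PB k" and re = "re k" for k]
      sum_term_prob_eq_1[OF finS E_sub acyc s0_in X_def]
    by (intro ballI normalized_weights_asymptotics[where Q = Q and Z = Z]) (auto simp: Q_def)
  moreover have "(\<lambda>k. term_prob E s0 X (PF k) x) \<longlonglongrightarrow> R x / (\<Sum>y \<in> X. R y)"
    if "\<forall>x \<in> X. (\<lambda>k. rx k x) \<longlonglongrightarrow> 0" and "0 < (\<Sum>y \<in> X. R y)" and "x \<in> X" for x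
    using term_prob_asymptotics that by (intro tendsto_normalized_limit[where r = rx]) auto
  ultimately show ?thesis by blast
qed

end
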